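(* Let $I=\{a,b\}$ with positive integers $a<b$. The sequence $(C_0(I),\ldots,C_{s(I)}(I))$ of Naruse-Newton coefficients of $I$ is unimodal if and only if $a=1$, or $a=2$, or $I=\{3,4\}$.
   Context: Partitions are drawn as Young diagrams $\mathbb{D}(\lambda)$ in English notation; $c_{i,j}$ is the cell in row $i$, column $j$. The hook length $h_\lambda(c)$ is the number of cells of $\mathbb{D}(\lambda)$ weakly right of $c$ in its row or weakly below $c$ in its column (counting $c$ once). For $\mu\subseteq\lambda$, an excited diagram of $\lambda/\mu$ is a subset of $\mathbb{D}(\lambda)$ obtained from $\mathbb{D}(\mu)$ by repeatedly replacing a cell $c_{i,j}\in D$ by $c_{i+1,j+1}$, allowed iff $c_{i+1,j+1}\in\mathbb{D}(\lambda)$ and none of $c_{i,j+1},c_{i+1,j},c_{i+1,j+1}$ lies in $D$; $\mathbb{E}(\lambda/\mu)$ is their set. A ribbon with $n$ cells is read from its lower-left to its upper-right cell, each successive cell directly right of or directly above the previous; it corresponds to the set of $i\in\{1,\ldots,n-1\}$ with cell $i$ directly below cell $i+1$. A descent set is a non-empty finite set $I$ of positive integers; $\lambda^I$ is the unique partition with $\lambda^I_1=\lambda^I_2$ such that the cells $c_{i,j}\in\mathbb{D}(\lambda^I)$ with fewer than three of $c_{i,j+1},c_{i+1,j},c_{i+1,j+1}$ in $\mathbb{D}(\lambda^I)$ form a ribbon corresponding to $I$; this ribbon is $\mathbb{D}(\lambda^I)\setminus\mathbb{D}(\mu^I)$ for a partition $\mu^I$. Let $s(I)=\lambda^I_1-1$.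 Naruse-Newton coefficients: every excited diagram of $\lambda^I/\mu^I$ meets row 1 in $\{c_{1,1},\ldots,c_{1,r}\}$, $0\le r\le s$; for $0\le j\le s(I)$, $C_j(I)=\sum_D\prod_{c\in D,\,c\notin\text{row }1}h_{\lambda^I}(c)$, summed over $D\in\mathbb{E}(\lambda^I/\mu^I)$ with exactly $s-j$ cells in row 1. A sequence $(x_k)_{k=0}^m$ is unimodal if there is an index $i$ with $0\le i\le m$ such that $x_0\le x_1\le\cdots\le x_i$ and $x_i\ge x_{i+1}\ge\cdots\ge x_m$. *)

theory Defs
  imports Main
begin

type_synonym cell = "nat \<times> nat"  \<comment> \<open>(row, column), 1-indexed, English notation\<close>

definition is_partition :: "nat list \<Rightarrow> bool" where
  "is_partition lam \<longleftrightarrow> sorted_wrt (\<ge>) lam \<and> 0 \<notin> set lam"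

definition part :: "nat list \<Rightarrow> nat \<Rightarrow> nat" where
  "part lam i = (if 1 \<le> i \<and> i \<le> length lam then lam ! (i - 1) else 0)"

definition diagram :: "nat list \<Rightarrow> cell set" where
  "diagram lam = {(i, j). 1 \<le> i \<and> i \<le> length lam \<and> 1 \<le> j \<and> j \<le> lam ! (i - 1)}"

definition hook :: "nat list \<Rightarrow> cell \<Rightarrow> nat" where
  "hook lam c = card {c' \<in> diagram lam.
      (fst c' = fst c \<and> snd c' \<ge> snd c) \<or> (snd c' = snd c \<and> fst c' \<ge> fst c)}"

inductive_set excited :: "nat list \<Rightarrow> nat list \<Rightarrow> cell set set" for lam mu where
  base: "diagram mu \<in> excited lam mu"
| step: "\<lbrakk> D \<in> excited lam mu; (i, j) \<in> D; (i + 1, j + 1) \<in> diagram lam;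
           (i, j + 1) \<notin> D; (i + 1, j) \<notin> D; (i + 1, j + 1) \<notin> D \<rbrakk>
          \<Longrightarrow> insert (i + 1, j + 1) (D - {(i, j)}) \<in> excited lam mu"

definition rim :: "nat list \<Rightarrow> cell set" where
  "rim lam = {c \<in> diagram lam.
     card ({(fst c, snd c + 1), (fst c + 1, snd c), (fst c + 1, snd c + 1)} \<inter> diagram lam) < 3}"

text \<open>R is a ribbon (read lower-left to upper-right, each cell directly right of or directly
  above the previous) corresponding to the descent set I.\<close>
definition ribbon_of :: "cell set \<Rightarrow> nat set \<Rightarrow> bool" where
  "ribbon_of R I \<longleftrightarrow> (\<exists>n c. n \<ge> 1 \<and> bij_betw c {1..n} R \<and>
     (\<forall>k \<in> {1..<n}.
        c (Suc k) = (fst (c k), snd (c k) + 1) \<or>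
        (fst (c (Suc k)) + 1 = fst (c k) \<and> snd (c (Suc k)) = snd (c k))) \<and>
     I = {i \<in> {1..<n}. fst (c (Suc i)) + 1 = fst (c i) \<and> snd (c (Suc i)) = snd (c i)})"

definition lambdaI :: "nat set \<Rightarrow> nat list" where
  "lambdaI I = (THE lam. is_partition lam \<and> part lam 1 = part lam 2 \<and> ribbon_of (rim lam) I)"

definition muI :: "nat set \<Rightarrow> nat list" where
  "muI I = (THE mu. is_partition mu \<and> diagram mu \<subseteq> diagram (lambdaI I) \<and>
                    diagram (lambdaI I) - diagram mu = rim (lambdaI I))"

definition sI :: "nat set \<Rightarrow> nat" where
  "sI I = part (lambdaI I) 1 - 1"

definition NN_coeff :: "nat set \<Rightarrow> nat \<Rightarrow> nat" where
  "NN_coeff I j = (\<Sum>D \<in> {D \<in> excited (lambdaI I) (muI I). card {c \<in> D. fst c = 1} = sI I - j}.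
                     \<Prod>c \<in> {c \<in> D. fst c \<noteq> 1}. hook (lambdaI I) c)"

definition unimodal :: "(nat \<Rightarrow> 'a::linorder) \<Rightarrow> nat \<Rightarrow> bool" where
  "unimodal x m \<longleftrightarrow> (\<exists>i \<le> m. (\<forall>k < i. x k \<le> x (Suc k)) \<and>
                               (\<forall>k. i \<le> k \<and> k < m \<longrightarrow> x k \<ge> x (Suc k)))"

end

theory Submission
  imports Defs
begin

(*
  For I = {a, b} the shape is lambda = (b-1, b-1, a) with inner shape mu = (b-2, a-1).
  An excited diagram only records how many cells of each row of mu have slid one step
  down-right; keeping x cells in row 1 and w cells in row 2 in place requires w <= x.
  Hence C_j, where x = b - 2 - j, is a single sum over w <= min x (a - 1), which factors as
    C_j = Q(x) * S(min x (a - 1) + 1),    S(m) = sum_{w<m} b(b-1)...(b-w+1) * (a-1-w)!,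
  where Q (row2_tail) is a product of row-2 hook lengths that decreases in x and S is
  hook_sum. So C_j is nondecreasing up to j = b - 1 - a, which settles a <= 2. For a >= 3
  the identity
    (b - a) S(k) + a! = (a-k)! b(b-1)...(b-k+1)
  yields C_j > C_(j+1) < C_(j+2) at j = b - 1 - a, except when (a, b) = (3, 4).
*)

lemma mem_diagram_iff_part: "(i, j) \<in> diagram lam \<longleftrightarrow> 1 \<le> j \<and> j \<le> part lam i"
  by (auto simp: diagram_def part_def)

lemma part_Nil [simp]: "part [] i = 0"
  by (simp add: part_def)

lemma part_Cons: "part (x # xs) i = (if i = 1 then x else part xs (i - 1))"
  by (auto simp: part_def nth_Cons')

lemma part_antimono:
  assumes "is_partition lam" "1 \<le> i" "i \<le> i'"
  shows "part lam i' \<le> part lam i"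
proof (cases "i' \<le> length lam")
  case True
  have "lam ! (i' - 1) \<le> lam ! (i - 1)" if "i < i'"
    using assms(1) that True \<open>1 \<le> i\<close> unfolding is_partition_def
    by (auto intro: sorted_wrt_nth_less)
  then show ?thesis
    using assms True by (cases "i = i'") (auto simp: part_def)
next
  case False
  then show ?thesis
    by (simp add: part_def)
qed

lemma part_pos:
  assumes "is_partition lam" "1 \<le> i" "i \<le> length lam"
  shows "0 < part lam i"
proof -
  have "lam ! (i - 1) \<in> set lam"
    using assms(2,3) by (intro nth_mem) simp
  then have "lam ! (i - 1) \<noteq> 0"
    using assms(1) unfolding is_partition_def by (metis gr0I)
  then show ?thesis
    using assms(2,3) by (simp add: part_def)
qed

lemma card_Int_less_iff:
  assumes "finite S"
  shows "card (S \<inter> A) < card S \<longleftrightarrow> \<not> S \<subseteq> A"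
proof
  assume "card (S \<inter> A) < card S"
  then show "\<not> S \<subseteq> A"
    by (metis Int_absorb2 less_irrefl)
next
  assume "\<not> S \<subseteq> A"
  then have "S \<inter> A \<subset> S"
    by blast
  then show "card (S \<inter> A) < card S"
    using assms by (simp add: psubset_card_mono)
qed

lemma mem_rim_iff:
  assumes "is_partition lam"
  shows "(i, j) \<in> rim lam \<longleftrightarrow> (i, j) \<in> diagram lam \<and> part lam (i + 1) \<le> j"
proof -
  define S where "S = {(i, j + 1), (i + 1, j), (i + 1, j + 1)}"
  have "finite S" "card S = 3"
    by (simp_all add: S_def)
  have full_iff: "S \<subseteq> diagram lam \<longleftrightarrow> j < part lam (i + 1)" if "(i, j) \<in> diagram lam"
  proof -
    have "1 \<le> i"
      using that by (simp add: diagram_def)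
    then show ?thesis
      using that part_antimono[OF assms, of i "i + 1"] by (auto simp: S_def mem_diagram_iff_part)
  qed
  have "(i, j) \<in> rim lam \<longleftrightarrow> (i, j) \<in> diagram lam \<and> card (S \<inter> diagram lam) < 3"
    unfolding rim_def S_def by simp
  also have "\<dots> \<longleftrightarrow> (i, j) \<in> diagram lam \<and> \<not> S \<subseteq> diagram lam"
    using card_Int_less_iff[OF \<open>finite S\<close>] \<open>card S = 3\<close> by simp
  also have "\<dots> \<longleftrightarrow> (i, j) \<in> diagram lam \<and> part lam (i + 1) \<le> j"
    using full_iff by auto
  finally show ?thesis .
qed

lemma rim_cell_bounds: "x \<in> rim lam \<Longrightarrow> 1 \<le> fst x \<and> fst x \<le> length lam \<and> 1 \<le> snd x"
  by (cases x) (simp add: rim_def diagram_def)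

lemma row_end_mem_rim:
  assumes "is_partition lam" "1 \<le> i" "i \<le> length lam"
  shows "(i, part lam i) \<in> rim lam"
  using part_pos[OF assms] part_antimono[OF assms(1,2), of "i + 1"]
  by (simp add: mem_rim_iff[OF assms(1)] mem_diagram_iff_part)

lemma bottom_left_mem_rim:
  assumes "is_partition lam" "lam \<noteq> []"
  shows "(length lam, 1) \<in> rim lam"
  using part_pos[OF assms(1), of "length lam"] assms(2)
  by (auto simp: Suc_le_eq mem_rim_iff[OF assms(1)] mem_diagram_iff_part part_def)

lemma partition_eq_if_diagram_eq:
  assumes "is_partition lam" "is_partition lam'" "diagram lam = diagram lam'"
  shows "lam = lam'"
proof -
  have part_eq: "part lam i = part lam' i" for i
  proof -
    have "1 \<le> j \<and> j \<le> part lam i \<longleftrightarrow> 1 \<le> j \<and> j \<le> part lam' i" for j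
      by (simp only: mem_diagram_iff_part[symmetric] assms(3))
    from this[of "part lam i"] this[of "part lam' i"] show ?thesis
      by linarith
  qed
  have nonzero: "part \<kappa> i \<noteq> 0 \<longleftrightarrow> i \<in> {1..length \<kappa>}" if "is_partition \<kappa>" for \<kappa> i
  proof
    show "i \<in> {1..length \<kappa>}" if "part \<kappa> i \<noteq> 0"
      using that by (auto simp: part_def split: if_splits)
    show "part \<kappa> i \<noteq> 0" if "i \<in> {1..length \<kappa>}"
      using that part_pos[OF \<open>is_partition \<kappa>\<close>, of i] by simp
  qed
  have "{1..length lam} = {1..length lam'}"
  proof (rule set_eqI)
    show "i \<in> {1..length lam} \<longleftrightarrow> i \<in> {1..length lam'}" for i
      using nonzero[OF assms(1), of i] nonzero[OF assms(2), of i] part_eq[of i] by simp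
  qed
  then have "length lam = length lam'"
    by (metis card_atLeastAtMost diff_Suc_1)
  moreover have "lam ! i = lam' ! i" if "i < length lam" for i
    using that \<open>length lam = length lam'\<close> part_eq[of "Suc i"] by (simp add: part_def)
  ultimately show ?thesis
    by (rule nth_equalityI)
qed

lemma ribbon_position:
  assumes steps: "\<forall>k \<in> {1..<n}. c (Suc k) = (fst (c k), snd (c k) + 1) \<or>
        (fst (c (Suc k)) + 1 = fst (c k) \<and> snd (c (Suc k)) = snd (c k))"
    and I: "I = {i \<in> {1..<n}. fst (c (Suc i)) + 1 = fst (c i) \<and> snd (c (Suc i)) = snd (c i)}"
    and "k \<in> {1..n}"
  shows "fst (c k) + card {i \<in> I. i < k} = fst (c 1) \<and>
         snd (c k) + card {i \<in> I. i < k} = snd (c 1) + (k - 1)"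
  using \<open>k \<in> {1..n}\<close>
proof (induction k)
  case 0
  then show ?case
    by simp
next
  case (Suc k)
  show ?case
  proof (cases "k = 0")
    case True
    then show ?thesis
      using I by auto
  next
    case False
    then have IH: "fst (c k) + card {i \<in> I. i < k} = fst (c 1) \<and>
        snd (c k) + card {i \<in> I. i < k} = snd (c 1) + (k - 1)" and k: "k \<in> {1..<n}"
      using Suc by auto
    have "{i \<in> I. i < Suc k} = (if k \<in> I then insert k {i \<in> I. i < k} else {i \<in> I. i < k})"
      by (auto simp: less_Suc_eq)
    then have count: "card {i \<in> I. i < Suc k} = card {i \<in> I. i < k} + (if k \<in> I then 1 else 0)"
      by simp
    show ?thesis
    proof (cases "k \<in> I")
      case True
      then have "fst (c (Suc k)) + 1 = fst (c k) \<and> snd (c (Suc k)) = snd (c k)"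
        using I by blast
      then show ?thesis
        using IH k True count by auto
    next
      case False
      then have "c (Suc k) = (fst (c k), snd (c k) + 1)"
        using I steps k by auto
      then show ?thesis
        using IH k False count by auto
    qed
  qed
qed

(* The rim runs from the bottom-left cell to row 1, so its ribbon starts at (length lam, 1)
   and has length lam - 1 descents. *)
lemma rim_ribbon_start:
  assumes lam: "is_partition lam" and n: "1 \<le> n" and bij: "bij_betw c {1..n} (rim lam)"
    and steps: "\<forall>k \<in> {1..<n}. c (Suc k) = (fst (c k), snd (c k) + 1) \<or>
        (fst (c (Suc k)) + 1 = fst (c k) \<and> snd (c (Suc k)) = snd (c k))"
    and I: "I = {i \<in> {1..<n}. fst (c (Suc i)) + 1 = fst (c i) \<and> snd (c (Suc i)) = snd (c i)}"
  shows "c 1 = (length lam, 1)" "length lam = card I + 1"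
proof -
  note pos = ribbon_position[OF steps I]
  define t where "t k = card {i \<in> I. i < k}" for k
  have rim_c: "rim lam = c ` {1..n}"
    using bij by (simp add: bij_betw_def)
  have cell: "1 \<le> fst (c k) \<and> fst (c k) \<le> length lam \<and> 1 \<le> snd (c k)" if "k \<in> {1..n}" for k
    using rim_cell_bounds[of "c k" lam] that rim_c by blast
  have walk: "\<exists>k \<in> {1..n}. fst x + t k = fst (c 1) \<and> snd x + t k = snd (c 1) + (k - 1)"
    if "x \<in> rim lam" for x
  proof -
    from that[unfolded rim_c] obtain k where "x = c k" "k \<in> {1..n}"
      by (rule imageE)
    then show ?thesis
      using pos[of k] unfolding t_def by auto
  qed
  have len_pos: "1 \<le> length lam"
    using cell[of 1] n by auto
  then have "lam \<noteq> []"
    by auto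
  then obtain k0 where k0: "k0 \<in> {1..n}" "length lam + t k0 = fst (c 1)"
    "1 + t k0 = snd (c 1) + (k0 - 1)"
    using walk[OF bottom_left_mem_rim[OF lam]] by auto
  then have "fst (c 1) = length lam" "snd (c 1) = 1"
    using cell[of 1] n by auto
  then show start: "c 1 = (length lam, 1)"
    by (simp add: prod_eq_iff)
  obtain k1 where "1 + t k1 = length lam"
    using walk[OF row_end_mem_rim[OF lam order_refl len_pos]] start by auto
  moreover have "t k1 \<le> card I"
    unfolding t_def using I by (intro card_mono) auto
  moreover have "{i \<in> I. i < n} = I"
    using I by auto
  then have "fst (c n) + card I = length lam"
    using pos[of n] start n by simp
  moreover have "1 \<le> fst (c n)"
    using cell[of n] n by simp
  ultimately show "length lam = card I + 1"
    by linarith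
qed

lemma rim_eq_ribbon_walk:
  assumes "is_partition lam" "ribbon_of (rim lam) I"
  obtains n where "I \<subseteq> {1..<n}" "length lam = card I + 1"
    "rim lam = (\<lambda>k. (length lam - card {i \<in> I. i < k}, k - card {i \<in> I. i < k})) ` {1..n}"
proof -
  obtain n c where n: "1 \<le> n" and bij: "bij_betw c {1..n} (rim lam)"
    and steps: "\<forall>k \<in> {1..<n}. c (Suc k) = (fst (c k), snd (c k) + 1) \<or>
        (fst (c (Suc k)) + 1 = fst (c k) \<and> snd (c (Suc k)) = snd (c k))"
    and I: "I = {i \<in> {1..<n}. fst (c (Suc i)) + 1 = fst (c i) \<and> snd (c (Suc i)) = snd (c i)}"
    using assms(2) unfolding ribbon_of_def by blast
  note start = rim_ribbon_start[OF assms(1) n bij steps I]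
  have rim_c: "rim lam = c ` {1..n}"
    using bij by (simp add: bij_betw_def)
  have "c k = (length lam - card {i \<in> I. i < k}, k - card {i \<in> I. i < k})" if "k \<in> {1..n}" for k
    using ribbon_position[OF steps I that] start(1) that by (auto simp: prod_eq_iff)
  then have "rim lam = (\<lambda>k. (length lam - card {i \<in> I. i < k}, k - card {i \<in> I. i < k})) ` {1..n}"
    unfolding rim_c by (rule image_cong[OF refl])
  moreover have "I \<subseteq> {1..<n}"
    using I by blast
  ultimately show thesis
    using start(2) by (intro that)
qed

lemma card_doubleton_less:
  fixes a b k :: nat
  assumes "a < b"
  shows "card {i \<in> {a, b}. i < k} = (if k \<le> a then 0 else if k \<le> b then 1 else 2)"
proof -
  have "{i \<in> {a, b}. i < k} = (if k \<le> a then {} else if k \<le> b then {a} else {a, b})"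
    using assms by (cases "k \<le> a"; cases "k \<le> b") auto
  then show ?thesis
    using assms by simp
qed

definition lambda_two :: "nat \<Rightarrow> nat \<Rightarrow> nat list" where
  "lambda_two a b = [b - 1, b - 1, a]"

lemma is_partition_lambda_two:
  fixes a b :: nat
  assumes "0 < a" "a < b"
  shows "is_partition (lambda_two a b)"
  using assms by (auto simp: lambda_two_def is_partition_def)

lemma part_lambda_two:
  "part (lambda_two a b) i = (if i = 1 \<or> i = 2 then b - 1 else if i = 3 then a else 0)"
proof -
  consider "i = 0" | "i = 1" | "i = 2" | "i = 3" | "3 < i"
    by linarith
  then show ?thesis
    by cases (simp_all add: lambda_two_def part_def)
qed

lemma mem_diagram_lambda_two:
  "(i, j) \<in> diagram (lambda_two a b) \<longleftrightarrow> 1 \<le> j \<and> (i \<in> {1, 2} \<and> j \<le> b - 1 \<or> i = 3 \<and> j \<le> a)"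
  by (auto simp: mem_diagram_iff_part part_lambda_two)

lemma mem_rim_lambda_two:
  fixes a b :: nat
  assumes "0 < a" "a < b"
  shows "(i, j) \<in> rim (lambda_two a b) \<longleftrightarrow>
    i = 1 \<and> j = b - 1 \<or> i = 2 \<and> a \<le> j \<and> j \<le> b - 1 \<or> i = 3 \<and> 1 \<le> j \<and> j \<le> a"
  using assms
  by (auto simp: mem_rim_iff[OF is_partition_lambda_two[OF assms]] mem_diagram_lambda_two part_lambda_two)

lemma rim_lambda_two_eq_image:
  fixes a b :: nat
  assumes "0 < a" "a < b"
  shows "rim (lambda_two a b)
    = (\<lambda>k. if k \<le> a then (3, k) else if k \<le> b then (2, k - 1) else (1, b - 1)) ` {1..b + 1}"
    (is "_ = ?c ` _")
proof (rule set_eqI)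
  fix x :: cell
  obtain i j where x: "x = (i, j)"
    by (cases x)
  show "x \<in> rim (lambda_two a b) \<longleftrightarrow> x \<in> ?c ` {1..b + 1}"
  proof
    assume "x \<in> rim (lambda_two a b)"
    then consider "i = 1" "j = b - 1" | "i = 2" "a \<le> j" "j \<le> b - 1" | "i = 3" "1 \<le> j" "j \<le> a"
      using x mem_rim_lambda_two[OF assms] by blast
    then show "x \<in> ?c ` {1..b + 1}"
    proof cases
      case 1
      then show ?thesis
        using x assms by (intro image_eqI[of _ _ "b + 1"]) auto
    next
      case 2
      then show ?thesis
        using x assms by (intro image_eqI[of _ _ "j + 1"]) auto
    next
      case 3
      then show ?thesis
        using x assms by (intro image_eqI[of _ _ j]) auto
    qed
  next
    assume "x \<in> ?c ` {1..b + 1}"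
    then show "x \<in> rim (lambda_two a b)"
      using assms by (auto simp: mem_rim_lambda_two)
  qed
qed

lemma ribbon_of_rim_lambda_two:
  fixes a b :: nat
  assumes "0 < a" "a < b"
  shows "ribbon_of (rim (lambda_two a b)) {a, b}"
proof -
  define c :: "nat \<Rightarrow> cell"
    where "c k = (if k \<le> a then (3, k) else if k \<le> b then (2, k - 1) else (1, b - 1))" for k
  have "c ` {1..b + 1} = rim (lambda_two a b)"
    unfolding c_def rim_lambda_two_eq_image[OF assms] ..
  moreover have "inj_on c {1..b + 1}"
    by (auto simp: inj_on_def c_def split: if_splits)
  moreover have "\<forall>k \<in> {1..<b + 1}. c (Suc k) = (fst (c k), snd (c k) + 1) \<or>
      (fst (c (Suc k)) + 1 = fst (c k) \<and> snd (c (Suc k)) = snd (c k))"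
    using assms by (auto simp: c_def)
  moreover have "{a, b} = {i \<in> {1..<b + 1}.
      fst (c (Suc i)) + 1 = fst (c i) \<and> snd (c (Suc i)) = snd (c i)}"
    using assms by (auto simp: c_def split: if_splits)
  ultimately show ?thesis
    unfolding ribbon_of_def bij_betw_def by (intro exI[of _ "b + 1"] exI[of _ c]) auto
qed

lemma lambda_two_unique:
  fixes a b :: nat
  assumes "0 < a" "a < b" and lam: "is_partition lam" "part lam 1 = part lam 2"
    "ribbon_of (rim lam) {a, b}"
  shows "lam = lambda_two a b"
proof -
  define t where "t k = (if k \<le> a then 0 else if k \<le> b then 1 else 2 :: nat)" for k
  have t: "card {i \<in> {a, b}. i < k} = t k" for k
    using card_doubleton_less[OF assms(2)] by (simp add: t_def)
  obtain n where n: "{a, b} \<subseteq> {1..<n}" and len: "length lam = card {a, b} + 1"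
    and rim: "rim lam = (\<lambda>k. (length lam - card {i \<in> {a, b}. i < k}, k - card {i \<in> {a, b}. i < k})) ` {1..n}"
    by (rule rim_eq_ribbon_walk[OF lam(1,3)])
  have len: "length lam = 3"
    using len assms(2) by simp
  have rim_cell: "(i, j) \<in> rim lam \<longleftrightarrow> (\<exists>k \<in> {1..n}. i = 3 - t k \<and> j = k - t k)" for i j
    unfolding rim len t by auto
  have rim_diagram: "rim lam \<subseteq> diagram lam"
    by (auto simp: rim_def)
  have "(3, part lam 3) \<in> rim lam"
    using row_end_mem_rim[OF lam(1)] len by simp
  then have "part lam 3 \<le> a"
    unfolding rim_cell by (auto simp: t_def split: if_splits)
  moreover have "(3, a) \<in> rim lam"
    using n assms unfolding rim_cell by (intro bexI[of _ a]) (auto simp: t_def)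
  then have "a \<le> part lam 3"
    using rim_diagram by (auto simp: mem_diagram_iff_part)
  moreover have "(2, part lam 2) \<in> rim lam"
    using row_end_mem_rim[OF lam(1)] len by simp
  then have "part lam 2 \<le> b - 1"
    unfolding rim_cell by (auto simp: t_def split: if_splits)
  moreover have "(2, b - 1) \<in> rim lam"
    using n assms unfolding rim_cell by (intro bexI[of _ b]) (auto simp: t_def)
  then have "b - 1 \<le> part lam 2"
    using rim_diagram by (auto simp: mem_diagram_iff_part)
  moreover have "lam = [part lam 1, part lam 2, part lam 3]"
    using len by (intro nth_equalityI) (auto simp: part_def less_Suc_eq numeral_3_eq_3)
  ultimately show ?thesis
    using lam(2) by (simp add: lambda_two_def)
qed

lemma lambdaI_two:
  fixes a b :: nat
  assumes "0 < a" "a < b"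
  shows "lambdaI {a, b} = lambda_two a b"
  unfolding lambdaI_def
proof (rule the_equality)
  show "is_partition (lambda_two a b) \<and> part (lambda_two a b) 1 = part (lambda_two a b) 2 \<and>
      ribbon_of (rim (lambda_two a b)) {a, b}"
    using is_partition_lambda_two[OF assms] ribbon_of_rim_lambda_two[OF assms] by (simp add: part_lambda_two)
  show "lam = lambda_two a b"
    if "is_partition lam \<and> part lam 1 = part lam 2 \<and> ribbon_of (rim lam) {a, b}" for lam
    using lambda_two_unique[OF assms] that by blast
qed

lemma sI_two:
  fixes a b :: nat
  assumes "0 < a" "a < b"
  shows "sI {a, b} = b - 2"
  using assms by (simp add: sI_def lambdaI_two part_lambda_two)

(* The excited diagram of lambda_two a b / mu, mu = (b-2, a-1), in which the first x cells of
   row 1 and the first w cells of row 2 of mu stay in place and all others have slid one step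
   down-right. *)
definition excited_cells :: "nat \<Rightarrow> nat \<Rightarrow> nat \<Rightarrow> nat \<Rightarrow> cell set" where
  "excited_cells a b x w = {(i, j). 1 \<le> j \<and>
     (i = 1 \<and> j \<le> x \<or> i = 2 \<and> (j \<le> w \<or> x + 2 \<le> j \<and> j \<le> b - 1) \<or> i = 3 \<and> w + 2 \<le> j \<and> j \<le> a)}"

lemma diagram_minus_rim_lambda_two:
  fixes a b :: nat
  assumes "0 < a" "a < b"
  shows "diagram (lambda_two a b) - rim (lambda_two a b) = excited_cells a b (b - 2) (a - 1)"
proof (rule set_eqI)
  fix x :: cell
  show "x \<in> diagram (lambda_two a b) - rim (lambda_two a b) \<longleftrightarrow> x \<in> excited_cells a b (b - 2) (a - 1)"
    using assms by (cases x) (auto simp: mem_rim_lambda_two mem_diagram_lambda_two excited_cells_def)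
qed

lemma diagram_muI_two:
  fixes a b :: nat
  assumes "0 < a" "a < b"
  shows "diagram (muI {a, b}) = excited_cells a b (b - 2) (a - 1)"
proof -
  define mu where "mu = [p \<leftarrow> [b - 2, a - 1]. 0 < p]"
  have mu: "is_partition mu"
    using assms by (auto simp: mu_def is_partition_def)
  have diagram_mu: "diagram mu = excited_cells a b (b - 2) (a - 1)"
  proof (rule set_eqI)
    fix x :: cell
    show "x \<in> diagram mu \<longleftrightarrow> x \<in> excited_cells a b (b - 2) (a - 1)"
      using assms by (cases x) (auto simp: mu_def mem_diagram_iff_part part_Cons excited_cells_def)
  qed
  let ?lam = "lambda_two a b"
  have rim_sub: "rim ?lam \<subseteq> diagram ?lam"
    by (auto simp: rim_def)
  have "muI {a, b} = mu"
    unfolding muI_def lambdaI_two[OF assms]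
  proof (rule the_equality)
    show "is_partition mu \<and> diagram mu \<subseteq> diagram ?lam \<and> diagram ?lam - diagram mu = rim ?lam"
      using mu rim_sub diagram_minus_rim_lambda_two[OF assms] diagram_mu by auto
    show "mu' = mu"
      if "is_partition mu' \<and> diagram mu' \<subseteq> diagram ?lam \<and> diagram ?lam - diagram mu' = rim ?lam"
      for mu'
    proof (rule partition_eq_if_diagram_eq)
      show "diagram mu' = diagram mu"
        using that diagram_minus_rim_lambda_two[OF assms] diagram_mu by auto
    qed (use that mu in auto)
  qed
  then show ?thesis
    using diagram_mu by simp
qed

lemma excited_cells_slide_row1:
  fixes a b x w :: nat
  assumes "1 \<le> x" "x + 2 \<le> b"
  shows "insert (2, x + 1) (excited_cells a b x w - {(1, x)}) = excited_cells a b (x - 1) w"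
  using assms by (auto simp: excited_cells_def)

lemma excited_cells_slide_row2:
  fixes a b x w :: nat
  assumes "1 \<le> w" "w \<le> x" "w + 1 \<le> a"
  shows "insert (3, w + 1) (excited_cells a b x w - {(2, w)}) = excited_cells a b x (w - 1)"
  using assms by (auto simp: excited_cells_def)

lemma mem_excited_cells:
  "(i, j) \<in> excited_cells a b x w \<longleftrightarrow> 1 \<le> j \<and>
     (i = 1 \<and> j \<le> x \<or> i = 2 \<and> (j \<le> w \<or> x + 2 \<le> j \<and> j \<le> b - 1) \<or> i = 3 \<and> w + 2 \<le> j \<and> j \<le> a)"
  by (simp add: excited_cells_def)

lemma excited_cells_excite:
  fixes a b x w :: nat
  assumes "0 < a" "a < b" and xw: "w \<le> x" "x \<le> b - 2" "w \<le> a - 1"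
    and ij: "(i, j) \<in> excited_cells a b x w"
    and inside: "(i + 1, j + 1) \<in> diagram (lambda_two a b)"
    and free: "(i, j + 1) \<notin> excited_cells a b x w" "(i + 1, j) \<notin> excited_cells a b x w"
      "(i + 1, j + 1) \<notin> excited_cells a b x w"
  shows "\<exists>x' w'. w' \<le> x' \<and> x' \<le> b - 2 \<and> w' \<le> a - 1 \<and>
    insert (i + 1, j + 1) (excited_cells a b x w - {(i, j)}) = excited_cells a b x' w'"
proof -
  from ij consider "i = 1" "1 \<le> j" "j \<le> x" | "i = 2" "1 \<le> j" "j \<le> w"
    | "i = 2" "x + 2 \<le> j" "j \<le> b - 1" | "i = 3" "w + 2 \<le> j" "j \<le> a"
    unfolding mem_excited_cells by blast
  then show ?thesis
  proof cases
    case 1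
    then have "j = x" "w < x" "x + 2 \<le> b"
      using free(1,2) xw assms(1,2) by (simp_all add: mem_excited_cells)
    then have "insert (i + 1, j + 1) (excited_cells a b x w - {(i, j)}) = excited_cells a b (x - 1) w"
      using excited_cells_slide_row1[of x b a w] 1 by (simp add: numeral_2_eq_2)
    moreover have "w \<le> x - 1" "x - 1 \<le> b - 2"
      using xw \<open>w < x\<close> by arith+
    ultimately show ?thesis
      using xw by blast
  next
    case 2
    then have "j = w" "w + 1 \<le> a"
      using free(1) inside xw by (simp_all add: mem_excited_cells mem_diagram_lambda_two)
    then have "insert (i + 1, j + 1) (excited_cells a b x w - {(i, j)}) = excited_cells a b x (w - 1)"
      using excited_cells_slide_row2[of w x a b] 2 xw by (simp add: numeral_3_eq_3)
    moreover have "w - 1 \<le> x" "w - 1 \<le> a - 1"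
      using xw by arith+
    ultimately show ?thesis
      using xw by blast
  next
    case 3
    then show ?thesis
      using free(3) inside xw by (simp add: mem_excited_cells mem_diagram_lambda_two)
  next
    case 4
    then show ?thesis
      using inside by (simp add: mem_diagram_lambda_two)
  qed
qed

lemma excited_lambda_two_imp_excited_cells:
  fixes a b :: nat
  assumes "0 < a" "a < b" "diagram mu = excited_cells a b (b - 2) (a - 1)"
    and "D \<in> excited (lambda_two a b) mu"
  shows "\<exists>x w. w \<le> x \<and> x \<le> b - 2 \<and> w \<le> a - 1 \<and> D = excited_cells a b x w"
  using assms(4)
proof (induction rule: excited.induct)
  case base
  have "a - 1 \<le> b - 2"
    using assms(1,2) by linarith
  show ?case
    by (rule exI[of _ "b - 2"], rule exI[of _ "a - 1"]) (use \<open>a - 1 \<le> b - 2\<close> assms(3) in simp)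
next
  case (step D i j)
  obtain x w where xw: "w \<le> x" "x \<le> b - 2" "w \<le> a - 1" and D: "D = excited_cells a b x w"
    using step.IH by blast
  show ?case
    unfolding D by (rule excited_cells_excite[OF assms(1,2) xw]) (use step.hyps in \<open>simp_all add: D\<close>)
qed

lemma excited_cells_top_mem_excited:
  fixes a b w :: nat
  assumes "0 < a" "a < b" "diagram mu = excited_cells a b (b - 2) (a - 1)" "w \<le> a - 1"
  shows "excited_cells a b (b - 2) w \<in> excited (lambda_two a b) mu"
  using assms(4)
proof (induction rule: inc_induct)
  case base
  show ?case
    using excited.base[of mu "lambda_two a b"] assms(3) by simp
next
  case (step v)
  have "insert (2 + 1, Suc v + 1) (excited_cells a b (b - 2) (Suc v) - {(2, Suc v)})
      \<in> excited (lambda_two a b) mu"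
    by (rule excited.step[OF step.IH])
      (use step.hyps assms(1,2) in \<open>auto simp: excited_cells_def mem_diagram_lambda_two\<close>)
  then show ?case
    using excited_cells_slide_row2[of "Suc v" "b - 2" a b] step.hyps assms(2) by simp
qed

lemma excited_cells_mem_excited:
  fixes a b x w :: nat
  assumes "0 < a" "a < b" "diagram mu = excited_cells a b (b - 2) (a - 1)"
    and "w \<le> x" "x \<le> b - 2" "w \<le> a - 1"
  shows "excited_cells a b x w \<in> excited (lambda_two a b) mu"
  using assms(5)
proof (induction rule: inc_induct)
  case base
  show ?case
    using excited_cells_top_mem_excited[OF assms(1,2,3,6)] .
next
  case (step y)
  have "insert (1 + 1, Suc y + 1) (excited_cells a b (Suc y) w - {(1, Suc y)})
      \<in> excited (lambda_two a b) mu"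
    by (rule excited.step[OF step.IH])
      (use step.hyps assms(4) in \<open>auto simp: excited_cells_def mem_diagram_lambda_two\<close>)
  moreover have "Suc y + 2 \<le> b"
    using step.hyps by linarith
  ultimately show ?case
    using excited_cells_slide_row1[of "Suc y" b a w] by (simp add: numeral_2_eq_2)
qed

definition row2_hook :: "nat \<Rightarrow> nat \<Rightarrow> nat \<Rightarrow> nat" where
  "row2_hook a b j = (if j \<le> a then b + 1 - j else b - j)"

definition row2_tail :: "nat \<Rightarrow> nat \<Rightarrow> nat \<Rightarrow> nat" where
  "row2_tail a b x = (\<Prod>j \<in> {x + 2..b - 1}. row2_hook a b j)"

definition falling_fact :: "nat \<Rightarrow> nat \<Rightarrow> nat" where
  "falling_fact b w = (\<Prod>j < w. b - j)"

definition hook_sum :: "nat \<Rightarrow> nat \<Rightarrow> nat \<Rightarrow> nat" where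
  "hook_sum a b m = (\<Sum>w < m. falling_fact b w * fact (a - 1 - w))"

(* coeff_two a b x is C_(b-2-x)({a, b}): x is the number of cells in row 1. *)
definition coeff_two :: "nat \<Rightarrow> nat \<Rightarrow> nat \<Rightarrow> nat" where
  "coeff_two a b x = row2_tail a b x * hook_sum a b (min x (a - 1) + 1)"

lemma row2_tail_step:
  assumes "x + 3 \<le> b"
  shows "row2_tail a b x = row2_hook a b (x + 2) * row2_tail a b (x + 1)"
  unfolding row2_tail_def using assms by (simp add: prod.atLeast_Suc_atMost)

lemma row2_hook_le: "j \<le> a \<Longrightarrow> row2_hook a b j = b + 1 - j"
  by (simp add: row2_hook_def)

lemma row2_hook_ge: "b - j \<le> row2_hook a b j"
  by (simp add: row2_hook_def diff_le_mono)

lemma row2_tail_pos: "0 < row2_tail a b x"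
  unfolding row2_tail_def by (rule prod_pos) (auto simp: row2_hook_def)

lemma falling_fact_Suc: "falling_fact b (Suc w) = falling_fact b w * (b - w)"
  by (simp add: falling_fact_def)

lemma falling_fact_pos: "w \<le> b \<Longrightarrow> 0 < falling_fact b w"
  unfolding falling_fact_def by (rule prod_pos) auto

lemma hook_sum_Suc: "hook_sum a b (Suc m) = hook_sum a b m + falling_fact b m * fact (a - 1 - m)"
  by (simp add: hook_sum_def)

lemma hook_sum_pos: "0 < m \<Longrightarrow> 0 < hook_sum a b m"
  unfolding hook_sum_def by (rule sum_pos2[of _ 0]) (auto simp: falling_fact_def)

lemma hook_sum_identity:
  assumes "k \<le> a" "a < b"
  shows "(b - a) * hook_sum a b k + fact a = fact (a - k) * falling_fact b k"
  using assms(1)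
proof (induction k)
  case 0
  then show ?case
    by (simp add: hook_sum_def falling_fact_def)
next
  case (Suc k)
  define r G F where "r = a - Suc k" and "G = (fact r :: nat)" and "F = falling_fact b k"
  have "a - k = r + 1" "a - 1 - k = r" "b - k = r + 1 + (b - a)"
    using Suc.prems assms(2) by (simp_all add: r_def)
  then have IH: "(b - a) * hook_sum a b k + fact a = (r + 1) * G * F"
    using Suc by (simp add: G_def F_def)
  have "(b - a) * hook_sum a b (Suc k) + fact a = (b - a) * hook_sum a b k + fact a + (b - a) * (F * G)"
    using \<open>a - 1 - k = r\<close> by (simp add: hook_sum_Suc G_def F_def algebra_simps)
  also have "\<dots> = (r + 1 + (b - a)) * (G * F)"
    unfolding IH by (simp add: algebra_simps)
  also have "\<dots> = (b - k) * (G * F)"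
    using \<open>b - k = r + 1 + (b - a)\<close> by simp
  also have "\<dots> = fact (a - Suc k) * falling_fact b (Suc k)"
    by (simp add: falling_fact_Suc G_def F_def r_def)
  finally show ?case .
qed

lemma hook_eq_arm_leg:
  assumes "1 \<le> j"
  shows "hook lam (i, j) = (part lam i + 1 - j) + card {i'. i < i' \<and> j \<le> part lam i'}"
proof -
  define legs where "legs = {i'. i < i' \<and> j \<le> part lam i'}"
  have "finite legs"
    by (rule finite_subset[of _ "{..length lam}"])
      (use assms in \<open>auto simp: legs_def part_def split: if_splits\<close>)
  have hook_set: "{c' \<in> diagram lam. (fst c' = fst (i, j) \<and> snd c' \<ge> snd (i, j)) \<or>
      (snd c' = snd (i, j) \<and> fst c' \<ge> fst (i, j))}
      = (\<lambda>j'. (i, j')) ` {j..part lam i} \<union> (\<lambda>i'. (i', j)) ` legs"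
  proof (rule set_eqI)
    fix c :: cell
    show "c \<in> {c' \<in> diagram lam. (fst c' = fst (i, j) \<and> snd c' \<ge> snd (i, j)) \<or>
      (snd c' = snd (i, j) \<and> fst c' \<ge> fst (i, j))} \<longleftrightarrow>
      c \<in> (\<lambda>j'. (i, j')) ` {j..part lam i} \<union> (\<lambda>i'. (i', j)) ` legs"
      using assms by (cases c) (force simp: mem_diagram_iff_part legs_def image_iff)
  qed
  have "hook lam (i, j) = card ((\<lambda>j'. (i, j')) ` {j..part lam i} \<union> (\<lambda>i'. (i', j)) ` legs)"
    unfolding hook_def hook_set ..
  also have "\<dots> = card {j..part lam i} + card legs"
    using \<open>finite legs\<close> by (subst card_Un_disjoint) (auto simp: legs_def card_image inj_on_def)
  finally show ?thesis
    by (simp add: legs_def)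
qed

lemma hook_lambda_two_row2:
  assumes "1 \<le> j" "a < b"
  shows "hook (lambda_two a b) (2, j) = row2_hook a b j"
proof -
  have legs: "{i'. 2 < i' \<and> j \<le> part (lambda_two a b) i'} = (if j \<le> a then {3} else {})"
    using assms by (auto simp: part_lambda_two)
  show ?thesis
    unfolding hook_eq_arm_leg[OF assms(1)] legs
    using assms by (simp add: part_lambda_two row2_hook_def Suc_diff_le)
qed

lemma hook_lambda_two_row3:
  assumes "1 \<le> j"
  shows "hook (lambda_two a b) (3, j) = a + 1 - j"
proof -
  have legs: "{i'. 3 < i' \<and> j \<le> part (lambda_two a b) i'} = {}"
    using assms by (auto simp: part_lambda_two)
  show ?thesis
    unfolding hook_eq_arm_leg[OF assms] legs by (simp add: part_lambda_two)
qed

lemma prod_descending_eq_fact: "(\<Prod>j \<in> {w + 2..a}. a + 1 - j) = (fact (a - 1 - w) :: nat)"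
proof (cases "w + 2 \<le> a")
  case True
  define n where "n = a - 1 - w"
  have ivl: "{w + 2..a} = {0 + (w + 2)..<n + (w + 2)}"
    using True by (auto simp: n_def)
  have "(\<Prod>j \<in> {w + 2..a}. a + 1 - j) = (\<Prod>i \<in> {0..<n}. a + 1 - (i + (w + 2)))"
    by (simp only: ivl prod.shift_bounds_nat_ivl)
  also have "\<dots> = (\<Prod>i \<in> {0..<n}. n - i)"
    using True by (intro prod.cong) (auto simp: n_def)
  also have "\<dots> = fact n"
    by (simp add: fact_prod_rev)
  finally show ?thesis
    by (simp add: n_def)
next
  case False
  then have "{w + 2..a} = {}" "a - 1 - w = 0"
    by auto
  then show ?thesis
    by simp
qed

lemma prod_hook_excited_cells:
  fixes a b x w :: nat
  assumes "0 < a" "a < b" "w \<le> x" "w \<le> a - 1"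
  shows "(\<Prod>c \<in> {c \<in> excited_cells a b x w. fst c \<noteq> 1}. hook (lambda_two a b) c)
    = falling_fact b w * row2_tail a b x * fact (a - 1 - w)"
proof -
  let ?h = "hook (lambda_two a b)"
  have cells: "{c \<in> excited_cells a b x w. fst c \<noteq> 1}
    = ((\<lambda>j. (2, j)) ` {1..w} \<union> (\<lambda>j. (2, j)) ` {x + 2..b - 1}) \<union> (\<lambda>j. (3, j)) ` {w + 2..a}"
    by (auto simp: excited_cells_def)
  have inj2: "inj_on (\<lambda>j. (2 :: nat, j)) A" and inj3: "inj_on (\<lambda>j. (3 :: nat, j)) A" for A
    by (auto simp: inj_on_def)
  have "(\<Prod>c \<in> {c \<in> excited_cells a b x w. fst c \<noteq> 1}. ?h c)
    = (\<Prod>c \<in> (\<lambda>j. (2, j)) ` {1..w}. ?h c) * (\<Prod>c \<in> (\<lambda>j. (2, j)) ` {x + 2..b - 1}. ?h c)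
      * (\<Prod>c \<in> (\<lambda>j. (3, j)) ` {w + 2..a}. ?h c)"
    unfolding cells using assms(3)
    by (subst prod.union_disjoint, simp, simp, force, subst prod.union_disjoint) auto
  also have "\<dots> = (\<Prod>j \<in> {1..w}. ?h (2, j)) * (\<Prod>j \<in> {x + 2..b - 1}. ?h (2, j))
      * (\<Prod>j \<in> {w + 2..a}. ?h (3, j))"
    by (simp add: prod.reindex[OF inj2] prod.reindex[OF inj3])
  also have "(\<Prod>j \<in> {1..w}. ?h (2, j)) = falling_fact b w"
  proof -
    have "(\<Prod>j \<in> {1..w}. ?h (2, j)) = (\<Prod>j \<in> {1..w}. b + 1 - j)"
      using assms by (intro prod.cong) (auto simp: hook_lambda_two_row2 row2_hook_def)
    then show ?thesis
      by (simp add: falling_fact_def prod.atLeast1_atMost_eq)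
  qed
  also have "(\<Prod>j \<in> {x + 2..b - 1}. ?h (2, j)) = row2_tail a b x"
    unfolding row2_tail_def using assms by (intro prod.cong) (auto simp: hook_lambda_two_row2)
  also have "(\<Prod>j \<in> {w + 2..a}. ?h (3, j)) = fact (a - 1 - w)"
  proof -
    have "(\<Prod>j \<in> {w + 2..a}. ?h (3, j)) = (\<Prod>j \<in> {w + 2..a}. a + 1 - j)"
      by (intro prod.cong) (auto simp: hook_lambda_two_row3)
    also have "\<dots> = fact (a - 1 - w)"
      by (rule prod_descending_eq_fact)
    finally show ?thesis .
  qed
  finally show ?thesis .
qed

lemma card_row1_excited_cells: "card {c \<in> excited_cells a b x w. fst c = 1} = x"
proof -
  have "{c \<in> excited_cells a b x w. fst c = 1} = (\<lambda>j. (1, j)) ` {1..x}"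
    by (auto simp: excited_cells_def)
  then show ?thesis
    by (simp add: card_image inj_on_def)
qed

lemma inj_on_excited_cells: "inj_on (excited_cells a b x) {..x}"
proof (rule inj_onI, rule ccontr)
  fix w w'
  assume "w \<in> {..x}" "w' \<in> {..x}" and eq: "excited_cells a b x w = excited_cells a b x w'"
    and "w \<noteq> w'"
  define v where "v = max w w'"
  have "1 \<le> v" "v \<le> x"
    using \<open>w \<noteq> w'\<close> \<open>w \<in> {..x}\<close> \<open>w' \<in> {..x}\<close> by (auto simp: v_def)
  then have "(2, v) \<in> excited_cells a b x u \<longleftrightarrow> v \<le> u" for u
    by (auto simp: excited_cells_def)
  then have "v \<le> w \<longleftrightarrow> v \<le> w'"
    using eq by blast
  then show False
    using \<open>w \<noteq> w'\<close> by (auto simp: v_def)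
qed

lemma excited_lambda_two_row1_card:
  fixes a b x :: nat
  assumes "0 < a" "a < b" "x \<le> b - 2"
  shows "{D \<in> excited (lambda_two a b) (muI {a, b}). card {c \<in> D. fst c = 1} = x}
    = excited_cells a b x ` {..min x (a - 1)}"
proof
  note mu = diagram_muI_two[OF assms(1,2)]
  show "{D \<in> excited (lambda_two a b) (muI {a, b}). card {c \<in> D. fst c = 1} = x}
      \<subseteq> excited_cells a b x ` {..min x (a - 1)}"
  proof
    fix D
    assume "D \<in> {D \<in> excited (lambda_two a b) (muI {a, b}). card {c \<in> D. fst c = 1} = x}"
    then have D: "D \<in> excited (lambda_two a b) (muI {a, b})" and row1: "card {c \<in> D. fst c = 1} = x"
      by simp_all
    obtain x' w where "w \<le> x'" "w \<le> a - 1" and D_eq: "D = excited_cells a b x' w"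
      using excited_lambda_two_imp_excited_cells[OF assms(1,2) mu D] by blast
    moreover have "x' = x"
      using row1 unfolding D_eq card_row1_excited_cells .
    ultimately show "D \<in> excited_cells a b x ` {..min x (a - 1)}"
      by auto
  qed
  show "excited_cells a b x ` {..min x (a - 1)}
      \<subseteq> {D \<in> excited (lambda_two a b) (muI {a, b}). card {c \<in> D. fst c = 1} = x}"
  proof
    fix D
    assume "D \<in> excited_cells a b x ` {..min x (a - 1)}"
    then obtain w where w: "w \<le> x" "w \<le> a - 1" and D: "D = excited_cells a b x w"
      by auto
    have "D \<in> excited (lambda_two a b) (muI {a, b})"
      unfolding D by (rule excited_cells_mem_excited[OF assms(1,2) mu w(1) assms(3) w(2)])
    moreover have "card {c \<in> D. fst c = 1} = x"
      unfolding D card_row1_excited_cells ..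
    ultimately show "D \<in> {D \<in> excited (lambda_two a b) (muI {a, b}). card {c \<in> D. fst c = 1} = x}"
      by blast
  qed
qed

lemma NN_coeff_two:
  fixes a b y :: nat
  assumes "0 < a" "a < b" "y \<le> b - 2"
  shows "NN_coeff {a, b} y = coeff_two a b (b - 2 - y)"
proof -
  define x where "x = b - 2 - y"
  have inj: "inj_on (excited_cells a b x) {..min x (a - 1)}"
    by (rule inj_on_subset[OF inj_on_excited_cells]) auto
  have diagrams: "{D \<in> excited (lambda_two a b) (muI {a, b}). card {c \<in> D. fst c = 1} = x}
      = excited_cells a b x ` {..min x (a - 1)}"
    by (rule excited_lambda_two_row1_card[OF assms(1,2)]) (simp add: x_def)
  have "NN_coeff {a, b} y = (\<Sum>D \<in> excited_cells a b x ` {..min x (a - 1)}.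
      \<Prod>c \<in> {c \<in> D. fst c \<noteq> 1}. hook (lambda_two a b) c)"
    unfolding NN_coeff_def lambdaI_two[OF assms(1,2)] sI_two[OF assms(1,2)] x_def[symmetric]
      diagrams ..
  also have "\<dots> = (\<Sum>w \<in> {..min x (a - 1)}.
      \<Prod>c \<in> {c \<in> excited_cells a b x w. fst c \<noteq> 1}. hook (lambda_two a b) c)"
    by (rule sum.reindex[OF inj, unfolded comp_def])
  also have "\<dots> = (\<Sum>w \<in> {..min x (a - 1)}. falling_fact b w * row2_tail a b x * fact (a - 1 - w))"
    using assms by (intro sum.cong refl prod_hook_excited_cells) auto
  also have "\<dots> = coeff_two a b x"
    unfolding coeff_two_def hook_sum_def
    by (simp add: lessThan_Suc_atMost sum_distrib_left mult_ac)
  finally show ?thesis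
    by (simp add: x_def)
qed

lemma unimodal_cong:
  assumes "\<And>k. k \<le> m \<Longrightarrow> f k = g k"
  shows "unimodal f m \<longleftrightarrow> unimodal g m"
proof -
  have "(\<forall>k<i. f k \<le> f (Suc k)) \<longleftrightarrow> (\<forall>k<i. g k \<le> g (Suc k))"
    and "(\<forall>k. i \<le> k \<and> k < m \<longrightarrow> f (Suc k) \<le> f k) \<longleftrightarrow> (\<forall>k. i \<le> k \<and> k < m \<longrightarrow> g (Suc k) \<le> g k)"
    if "i \<le> m" for i
    using that assms by auto
  then show ?thesis
    unfolding unimodal_def by blast
qed

lemma not_unimodal_if_valley:
  assumes "k + 2 \<le> m" "f (Suc k) < f k" "f (Suc k) < f (Suc (Suc k))"
  shows "\<not> unimodal f m"
proof
  assume "unimodal f m"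
  then obtain i where up: "\<forall>k < i. f k \<le> f (Suc k)" and down: "\<forall>k. i \<le> k \<and> k < m \<longrightarrow> f (Suc k) \<le> f k"
    unfolding unimodal_def by blast
  show False
  proof (cases "i \<le> Suc k")
    case True
    then show False
      using down[rule_format, of "Suc k"] assms(1,3) by simp
  next
    case False
    then show False
      using up[rule_format, of k] assms(2) by simp
  qed
qed

lemma coeff_two_Suc_le:
  assumes "a - 1 \<le> x" "x + 3 \<le> b"
  shows "coeff_two a b (Suc x) \<le> coeff_two a b x"
proof -
  have "1 \<le> b - (x + 2)"
    using assms(2) by arith
  then have "1 \<le> row2_hook a b (x + 2)"
    using row2_hook_ge order_trans by blast
  then have "row2_tail a b (Suc x) \<le> row2_tail a b x"
    unfolding row2_tail_step[OF assms(2)] by (metis Suc_eq_plus1 mult_1 mult_le_mono1)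
  moreover have "min (Suc x) (a - 1) = min x (a - 1)"
    using assms(1) by simp
  ultimately show ?thesis
    unfolding coeff_two_def by (simp add: mult_le_mono1)
qed

lemma unimodal_coeff_two_small:
  assumes "0 < a" "a \<le> 2" "a < b"
  shows "unimodal (\<lambda>y. coeff_two a b (b - 2 - y)) (b - 2)"
  unfolding unimodal_def
proof (intro exI[of _ "b - 1 - a"] conjI allI impI)
  show "b - 1 - a \<le> b - 2"
    using assms by simp
  show "coeff_two a b (b - 2 - k) \<le> coeff_two a b (b - 2 - Suc k)" if "k < b - 1 - a" for k
  proof -
    have "b - 2 - k = Suc (b - 2 - Suc k)"
      using that assms by simp
    then show ?thesis
      using coeff_two_Suc_le[of a "b - 2 - Suc k" b] that assms by simp
  qed
  show "coeff_two a b (b - 2 - Suc k) \<le> coeff_two a b (b - 2 - k)" if "b - 1 - a \<le> k \<and> k < b - 2" for k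
  proof -
    have "a = 2" "b - 2 - k = 1" "b - 2 - Suc k = 0"
      using that assms by auto
    have "row2_tail 2 b 0 = (b - 1) * row2_tail 2 b 1"
      using row2_tail_step[of 0 b 2] \<open>a = 2\<close> assms(3) by (simp add: row2_hook_def)
    then have "coeff_two 2 b 0 = (b - 1) * row2_tail 2 b 1" "coeff_two 2 b 1 = (b + 1) * row2_tail 2 b 1"
      by (simp_all add: coeff_two_def hook_sum_def falling_fact_def numeral_2_eq_2)
    moreover have "(b - 1) * row2_tail 2 b 1 \<le> (b + 1) * row2_tail 2 b 1"
      by (rule mult_le_mono1) simp
    ultimately show ?thesis
      using \<open>a = 2\<close> \<open>b - 2 - k = 1\<close> \<open>b - 2 - Suc k = 0\<close> by simp
  qed
qed

lemma unimodal_coeff_two_3_4: "unimodal (\<lambda>y. coeff_two 3 4 (2 - y)) 2"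
proof -
  have "coeff_two 3 4 0 = 12" "coeff_two 3 4 1 = 12" "coeff_two 3 4 2 = 18"
    by (simp_all add: coeff_two_def row2_tail_step row2_tail_def row2_hook_def hook_sum_def
        falling_fact_def numeral_eq_Suc)
  then show ?thesis
    unfolding unimodal_def by (intro exI[of _ 0]) (auto simp: less_Suc_eq numeral_2_eq_2)
qed

lemma hook_sum_drop:
  assumes "1 \<le> a" "a < b"
  shows "(b - a + 1) * hook_sum a b (a - 1) < hook_sum a b a"
proof -
  define d S P where "d = b - a" and "S = hook_sum a b (a - 1)" and "P = falling_fact b (a - 1)"
  have "hook_sum a b a = S + P"
    using hook_sum_Suc[of a b "a - 1"] assms by (simp add: S_def P_def)
  moreover have "d * S + fact a = P"
    using hook_sum_identity[of "a - 1" a b] assms by (simp add: d_def S_def P_def)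
  then have "d * S < P"
    using fact_gt_zero[of a, where 'a = nat] by linarith
  ultimately show ?thesis
    unfolding d_def[symmetric] S_def[symmetric] by simp
qed

lemma hook_sum_rise:
  assumes "3 \<le> a" "a < b" "\<not> (a = 3 \<and> b = 4)"
  shows "hook_sum a b (a - 1) < (b - a + 2) * hook_sum a b (a - 2)"
proof -
  define d W S where "d = b - a" and "W = falling_fact b (a - 3)" and "S = hook_sum a b (a - 3)"
  have ivl: "Suc (a - 3) = a - 2" "Suc (a - 2) = a - 1" "a - 1 - (a - 3) = 2" "a - 1 - (a - 2) = 1"
    "b - (a - 3) = d + 3"
    using assms by (auto simp: d_def)
  have two: "hook_sum a b (a - 2) = S + 2 * W"
    using hook_sum_Suc[of a b "a - 3"] unfolding ivl by (simp add: S_def W_def)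
  moreover have "hook_sum a b (a - 1) = S + 2 * W + W * (d + 3)"
    using hook_sum_Suc[of a b "a - 2"] falling_fact_Suc[of b "a - 3"] two unfolding ivl
    by (simp add: W_def)
  moreover have "0 < W"
    using assms by (simp add: W_def falling_fact_pos)
  have "W < d * S + S + d * W"
  proof (cases "a = 3")
    case True
    then have "2 \<le> d"
      using assms by (simp add: d_def)
    then have "2 * W \<le> d * W"
      by (rule mult_le_mono1)
    then show ?thesis
      using \<open>0 < W\<close> by linarith
  next
    case False
    then have "0 < S"
      using assms by (simp add: S_def hook_sum_pos)
    moreover have "1 \<le> d"
      using assms unfolding d_def by arith
    then have "W \<le> d * W"
      by simp
    ultimately show ?thesis
      by linarith
  qed
  ultimately show ?thesis
    unfolding d_def[symmetric] by (simp add: algebra_simps)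
qed

lemma coeff_two_drop:
  assumes "3 \<le> a" "a < b"
  shows "coeff_two a b (a - 2) < coeff_two a b (a - 1)"
proof -
  define F where "F = row2_tail a b (a - 1)"
  have ivl: "a - 2 + 2 = a" "a - 2 + 1 = a - 1" "min (a - 2) (a - 1) + 1 = a - 1"
    "min (a - 1) (a - 1) + 1 = a"
    using assms by auto
  have "row2_hook a b a = b + 1 - a"
    by (simp add: row2_hook_le)
  also have "\<dots> = b - a + 1"
    using assms by arith
  finally have "row2_tail a b (a - 2) = (b - a + 1) * F"
    using row2_tail_step[of "a - 2" b a] assms unfolding ivl by (simp add: F_def)
  then have low: "coeff_two a b (a - 2) = F * ((b - a + 1) * hook_sum a b (a - 1))"
    unfolding coeff_two_def ivl by (simp add: algebra_simps)
  have high: "coeff_two a b (a - 1) = F * hook_sum a b a"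
    unfolding coeff_two_def ivl F_def ..
  have "0 < F"
    by (simp add: F_def row2_tail_pos)
  with hook_sum_drop[of a b] assms show ?thesis
    unfolding low high by simp
qed

lemma coeff_two_rise:
  assumes "3 \<le> a" "a < b" "\<not> (a = 3 \<and> b = 4)"
  shows "coeff_two a b (a - 2) < coeff_two a b (a - 3)"
proof -
  define F where "F = row2_tail a b (a - 2)"
  have ivl: "a - 3 + 2 = a - 1" "a - 3 + 1 = a - 2" "min (a - 3) (a - 1) + 1 = a - 2"
    "min (a - 2) (a - 1) + 1 = a - 1"
    using assms by auto
  have "row2_hook a b (a - 1) = b + 1 - (a - 1)"
    by (simp add: row2_hook_le)
  also have "\<dots> = b - a + 2"
    using assms by arith
  finally have "row2_tail a b (a - 3) = (b - a + 2) * F"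
    using row2_tail_step[of "a - 3" b a] assms unfolding ivl by (simp add: F_def)
  then have high: "coeff_two a b (a - 3) = F * ((b - a + 2) * hook_sum a b (a - 2))"
    unfolding coeff_two_def ivl by (simp add: algebra_simps)
  have low: "coeff_two a b (a - 2) = F * hook_sum a b (a - 1)"
    unfolding coeff_two_def ivl F_def ..
  have "0 < F"
    by (simp add: F_def row2_tail_pos)
  with hook_sum_rise[OF assms] show ?thesis
    unfolding low high by simp
qed

lemma not_unimodal_coeff_two:
  assumes "3 \<le> a" "a < b" "\<not> (a = 3 \<and> b = 4)"
  shows "\<not> unimodal (\<lambda>y. coeff_two a b (b - 2 - y)) (b - 2)"
proof (rule not_unimodal_if_valley[of "b - 1 - a"])
  have "b - 2 - (b - 1 - a) = a - 1" "b - 2 - Suc (b - 1 - a) = a - 2"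
    "b - 2 - Suc (Suc (b - 1 - a)) = a - 3"
    using assms by auto
  then show "coeff_two a b (b - 2 - Suc (b - 1 - a)) < coeff_two a b (b - 2 - (b - 1 - a))"
    "coeff_two a b (b - 2 - Suc (b - 1 - a)) < coeff_two a b (b - 2 - Suc (Suc (b - 1 - a)))"
    using coeff_two_drop[OF assms(1,2)] coeff_two_rise[OF assms] by simp_all
qed (use assms in simp)

theorem corollary6p2:
  fixes a b :: nat
  assumes "0 < a" and "a < b"
  shows "unimodal (NN_coeff {a, b}) (sI {a, b}) \<longleftrightarrow> a = 1 \<or> a = 2 \<or> (a = 3 \<and> b = 4)"
proof -
  have "unimodal (NN_coeff {a, b}) (sI {a, b}) \<longleftrightarrow> unimodal (\<lambda>y. coeff_two a b (b - 2 - y)) (b - 2)"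
    unfolding sI_two[OF assms] by (rule unimodal_cong) (simp add: NN_coeff_two[OF assms])
  also have "\<dots> \<longleftrightarrow> a = 1 \<or> a = 2 \<or> (a = 3 \<and> b = 4)"
  proof (cases "a \<le> 2")
    case True
    then show ?thesis
      using unimodal_coeff_two_small[OF assms(1) True assms(2)] assms(1) by auto
  next
    case False
    show ?thesis
    proof (cases "a = 3 \<and> b = 4")
      case True
      then show ?thesis
        using unimodal_coeff_two_3_4 by simp
    next
      case not_3_4: False
      then show ?thesis
        using not_unimodal_coeff_two[of a b] False assms(2) by simp
    qed
  qed
  finally show ?thesis .
qed

end
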